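(* Let $1\le k\le s\le d$. Let $\Phi=\mathbb{E}_{S\subseteq[d],|S|=s}\,\phi_S^{\otimes k}$ and \[ \tilde\Phi=\mathbb{E}_{S\subseteq[d],|S|=s}\left[\frac{1}{s^{\underline{k}}}\sum_{\vec i,\vec j\in A(S,k)}|\vec i\rangle\langle\vec j|\right], \] where $S$ is a uniformly random subset of $[d]$ of size $s$. Then $\|\Phi-\tilde\Phi\|_1=O(k/\sqrt{s})$ (with an absolute implied constant).
   Context: $\phi_S=\left(\frac{1}{\sqrt{s}}\sum_{i\in S}|i\rangle\right)\left(\frac{1}{\sqrt{s}}\sum_{i\in S}\langle i|\right)$ for $S\subseteq[d]$ with $|S|=s$, in the computational basis of $\mathbb{C}^d$. $A(S,k)=\{(i_1,\dots,i_k)\in S^k: i_j\ne i_{j'}\text{ for }j\ne j'\}$; $|\vec i\rangle=|i_1\rangle\otimes\cdots\otimes|i_k\rangle$. $n^{\underline{k}}=n(n-1)\cdots(n-k+1)$. $\|\cdot\|_1$ is the trace norm. *)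

theory Defs
  imports "Jordan_Normal_Form.Schur_Decomposition" "HOL-Computational_Algebra.Polynomial"
begin

definition singular_values :: "complex mat \<Rightarrow> real multiset" where
  "singular_values A = image_mset (\<lambda>z. sqrt (Re z)) (proots (char_poly (mat_adjoint A * A)))"

definition trace_norm :: "complex mat \<Rightarrow> real" where
  "trace_norm A = sum_mset (singular_values A)"

(* Computational basis of (C^d)^{\<otimes>k}: basis index a < d^k corresponds to the k-tuple
   (i_1,...,i_k) with i_{t+1} = a div d^t mod d. *)
definition tup :: "nat \<Rightarrow> nat \<Rightarrow> nat \<Rightarrow> nat list" where
  "tup d k a = map (\<lambda>t. a div d ^ t mod d) [0..<k]"

(* phi_S = |u_S><u_S| with u_S = s^{-1/2} sum_{i in S} |i>, as a d x d matrix *)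
definition phi :: "nat \<Rightarrow> nat set \<Rightarrow> complex mat" where
  "phi d S = mat d d (\<lambda>(i, j).
      (if i \<in> S then 1 / complex_of_real (sqrt (card S)) else 0) *
      cnj (if j \<in> S then 1 / complex_of_real (sqrt (card S)) else 0))"

definition tensor_pow :: "nat \<Rightarrow> nat \<Rightarrow> complex mat \<Rightarrow> complex mat" where
  "tensor_pow d k M = mat (d ^ k) (d ^ k) (\<lambda>(a, b).
      \<Prod>t<k. M $$ (tup d k a ! t, tup d k b ! t))"

definition distinct_tuples :: "nat set \<Rightarrow> nat \<Rightarrow> nat list set" where
  "distinct_tuples S k = {xs. length xs = k \<and> set xs \<subseteq> S \<and> distinct xs}"

(* (1/s^{\<underline>k}) sum_{i,j in A(S,k)} |i><j|, as a d^k x d^k matrix *)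
definition tilde_term :: "nat \<Rightarrow> nat \<Rightarrow> nat set \<Rightarrow> complex mat" where
  "tilde_term d k S = mat (d ^ k) (d ^ k) (\<lambda>(a, b).
      if tup d k a \<in> distinct_tuples S k \<and> tup d k b \<in> distinct_tuples S k
      then 1 / of_nat (pochhammer (card S + 1 - k) k) else 0)"

(* subsets of [d] of size s; [d] is rendered as {0..<d} *)
definition subsets_of_size :: "nat \<Rightarrow> nat \<Rightarrow> nat set set" where
  "subsets_of_size d s = {S. S \<subseteq> {0..<d} \<and> card S = s}"

definition expect_S :: "nat \<Rightarrow> nat \<Rightarrow> nat \<Rightarrow> (nat set \<Rightarrow> complex mat) \<Rightarrow> complex mat" where
  "expect_S d s k F = mat (d ^ k) (d ^ k) (\<lambda>(a, b).
      (\<Sum>S\<in>subsets_of_size d s. F S $$ (a, b)) / of_nat (card (subsets_of_size d s)))"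

definition Phi :: "nat \<Rightarrow> nat \<Rightarrow> nat \<Rightarrow> complex mat" where
  "Phi d s k = expect_S d s k (\<lambda>S. tensor_pow d k (phi d S))"

definition Phi_tilde :: "nat \<Rightarrow> nat \<Rightarrow> nat \<Rightarrow> complex mat" where
  "Phi_tilde d s k = expect_S d s k (\<lambda>S. tilde_term d k S)"

end

theory Submission
  imports Defs "HOL-Analysis.L2_Norm" "HOL-Analysis.Infinite_Products"
begin

(* Write |u_X> for the unit vector spread uniformly over a finite set X of k-tuples. The tensor
   power of phi_S is |f_S><f_S| with f_S = u_{S^k}, and the summand of Phi~ is |g_S><g_S| with
   g_S = u_{A(S,k)}, so Phi - Phi~ is an average of differences of rank-one projections. Writing the
   Hermitian difference in an orthonormal eigenbasis (u_i), its trace norm is the sum over i of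
   |E_S (|<u_i,f_S>|^2 - |<u_i,g_S>|^2)|, which Cauchy-Schwarz and Parseval bound by
   E_S ||f_S - g_S|| (||f_S|| + ||g_S||) <= 2 max_S ||f_S - g_S||. Finally
   ||f_S - g_S||^2 = 2 - 2 sqrt r <= 2 (1 - r) for r = s^(k falling)/s^k, and the Weierstrass
   product inequality gives 1 - r <= k^2/(2s), so the trace norm is at most 2k/sqrt s. *)

(* Infinite_Products brings in the Euclidean-space vectors and matrices, whose names and
   notation clash with those of Jordan_Normal_Form. *)
hide_type (open) Finite_Cartesian_Product.vec
hide_const (open) Finite_Cartesian_Product.mat Finite_Cartesian_Product.vec
no_notation Finite_Cartesian_Product.vec_nth (infixl "$" 90)

section \<open>Adjoints, unitary matrices and real diagonal matrices\<close>

lemma index_mult_mat_sum: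
  "A \<in> carrier_mat n m \<Longrightarrow> B \<in> carrier_mat m p \<Longrightarrow> i < n \<Longrightarrow> j < p \<Longrightarrow>
   (A * B) $$ (i, j) = (\<Sum>k<m. A $$ (i, k) * B $$ (k, j))"
  by (auto simp: scalar_prod_def atLeast0LessThan)

lemma dim_mat_adjoint [simp]:
  "dim_row (mat_adjoint A) = dim_col A" "dim_col (mat_adjoint A) = dim_row A"
  by (simp_all add: mat_adjoint_def)

lemma index_mat_adjoint [simp]:
  fixes A :: "complex mat"
  shows "i < dim_col A \<Longrightarrow> j < dim_row A \<Longrightarrow> mat_adjoint A $$ (i, j) = cnj (A $$ (j, i))"
  by (simp add: mat_adjoint_def mat_of_rows_index)

lemma mat_adjoint_carrier [simp]: "A \<in> carrier_mat n m \<Longrightarrow> mat_adjoint A \<in> carrier_mat m n"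
  by (rule carrier_matI) (auto dest: carrier_matD)

lemma mat_adjoint_adjoint [simp]: "mat_adjoint (mat_adjoint A) = (A :: complex mat)"
  by (rule eq_matI) auto

lemma mat_adjoint_mult:
  fixes A B :: "complex mat"
  assumes A: "A \<in> carrier_mat n m" and B: "B \<in> carrier_mat m p"
  shows "mat_adjoint (A * B) = mat_adjoint B * mat_adjoint A"
proof (rule eq_matI)
  fix i j assume "i < dim_row (mat_adjoint B * mat_adjoint A)" "j < dim_col (mat_adjoint B * mat_adjoint A)"
  hence i: "i < p" and j: "j < n" using A B by auto
  have "mat_adjoint (A * B) $$ (i, j) = cnj (\<Sum>k<m. A $$ (j, k) * B $$ (k, i))"
    using A B i j by (simp add: index_mult_mat_sum[OF A B j i])
  also have "\<dots> = (\<Sum>k<m. mat_adjoint B $$ (i, k) * mat_adjoint A $$ (k, j))"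
    using A B i j by (auto simp: mult.commute intro!: sum.cong)
  also have "\<dots> = (mat_adjoint B * mat_adjoint A) $$ (i, j)"
    using A B i j by (subst index_mult_mat_sum[of _ p m _ n]) auto
  finally show "mat_adjoint (A * B) $$ (i, j) = (mat_adjoint B * mat_adjoint A) $$ (i, j)" .
qed (use A B in auto)

lemma mult_carrier_mat_square [simp]:
  "A \<in> carrier_mat n n \<Longrightarrow> B \<in> carrier_mat n n \<Longrightarrow> A * B \<in> carrier_mat n n"
  by (rule mult_carrier_mat)

definition unitary_mat :: "nat \<Rightarrow> complex mat \<Rightarrow> bool" where
  "unitary_mat n U \<longleftrightarrow>
     U \<in> carrier_mat n n \<and> mat_adjoint U * U = 1\<^sub>m n \<and> U * mat_adjoint U = 1\<^sub>m n"

lemma unitary_matI: "U \<in> carrier_mat n n \<Longrightarrow> mat_adjoint U * U = 1\<^sub>m n \<Longrightarrow> unitary_mat n U"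
  unfolding unitary_mat_def using mat_mult_left_right_inverse[of "mat_adjoint U" n U] by auto

lemma unitary_mat_cancel:
  assumes "unitary_mat n U" "X \<in> carrier_mat n n"
  shows "mat_adjoint U * (U * X) = X" "U * (mat_adjoint U * X) = X"
  using assms assoc_mult_mat[of "mat_adjoint U" n n U n X n] assoc_mult_mat[of U n n "mat_adjoint U" n X n]
  unfolding unitary_mat_def by auto

lemma unitary_mat_mult:
  assumes U: "unitary_mat n U" and V: "unitary_mat n V"
  shows "unitary_mat n (U * V)"
proof (rule unitary_matI)
  have c: "U \<in> carrier_mat n n" "V \<in> carrier_mat n n" using U V unfolding unitary_mat_def by auto
  then show "U * V \<in> carrier_mat n n" by simp
  have "mat_adjoint (U * V) * (U * V) = mat_adjoint V * (mat_adjoint U * (U * V))"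
    using c by (simp add: mat_adjoint_mult[OF c] assoc_mult_mat[of _ n n _ n _ n])
  also have "\<dots> = 1\<^sub>m n" using U V c by (simp add: unitary_mat_cancel unitary_mat_def)
  finally show "mat_adjoint (U * V) * (U * V) = 1\<^sub>m n" .
qed

lemma unitary_mat_conj_eq:
  assumes U: "unitary_mat n U" and A: "A \<in> carrier_mat n n"
  shows "U * (mat_adjoint U * A * U) * mat_adjoint U = A"
proof -
  have c: "U \<in> carrier_mat n n" using U unfolding unitary_mat_def by auto
  have "U * (mat_adjoint U * A * U) * mat_adjoint U = U * (mat_adjoint U * (A * (U * mat_adjoint U)))"
    using c A by (simp add: assoc_mult_mat[of _ n n _ n _ n])
  thus ?thesis using U A unfolding unitary_mat_def by (simp add: unitary_mat_cancel[OF U])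
qed

definition real_diag_mat :: "nat \<Rightarrow> (nat \<Rightarrow> real) \<Rightarrow> complex mat" where
  "real_diag_mat n l = mat n n (\<lambda>(i, j). if i = j then complex_of_real (l i) else 0)"

lemma real_diag_mat_carrier [simp]: "real_diag_mat n l \<in> carrier_mat n n"
  by (simp add: real_diag_mat_def)

lemma mat_adjoint_real_diag_mat [simp]: "mat_adjoint (real_diag_mat n l) = real_diag_mat n l"
  by (rule eq_matI) (auto simp: real_diag_mat_def)

lemma real_diag_mat_mult: "real_diag_mat n l * real_diag_mat n m = real_diag_mat n (\<lambda>i. l i * m i)"
  by (rule eq_matI)
     (auto simp: real_diag_mat_def scalar_prod_def if_distrib[of "\<lambda>x. x * _"] cong: if_cong)

section \<open>Unitary diagonalisation of Hermitian matrices\<close>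

definition block_diag_scalar :: "complex \<Rightarrow> complex mat \<Rightarrow> complex mat" where
  "block_diag_scalar c M = mat (Suc (dim_row M)) (Suc (dim_col M)) (\<lambda>(i, j).
     if i = 0 \<and> j = 0 then c else if i = 0 \<or> j = 0 then 0 else M $$ (i - 1, j - 1))"

lemma block_diag_scalar_carrier [simp]:
  "M \<in> carrier_mat n m \<Longrightarrow> block_diag_scalar c M \<in> carrier_mat (Suc n) (Suc m)"
  by (auto simp: block_diag_scalar_def)

lemma block_diag_scalar_mult:
  assumes M: "M \<in> carrier_mat n m" and N: "N \<in> carrier_mat m p"
  shows "block_diag_scalar a M * block_diag_scalar b N = block_diag_scalar (a * b) (M * N)"
proof (rule eq_matI)
  fix i j assume "i < dim_row (block_diag_scalar (a * b) (M * N))"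
    "j < dim_col (block_diag_scalar (a * b) (M * N))"
  hence i: "i < Suc n" and j: "j < Suc p" using M N by (auto simp: block_diag_scalar_def)
  have "(block_diag_scalar a M * block_diag_scalar b N) $$ (i, j)
      = (\<Sum>k<Suc m. block_diag_scalar a M $$ (i, k) * block_diag_scalar b N $$ (k, j))"
    using M N i j by (intro index_mult_mat_sum) auto
  also have "\<dots> = block_diag_scalar a M $$ (i, 0) * block_diag_scalar b N $$ (0, j)
        + (\<Sum>k<m. block_diag_scalar a M $$ (i, Suc k) * block_diag_scalar b N $$ (Suc k, j))"
    by (rule sum.lessThan_Suc_shift)
  also have "\<dots> = block_diag_scalar (a * b) (M * N) $$ (i, j)"
    using M N i j by (cases i; cases j) (auto simp: block_diag_scalar_def scalar_prod_def atLeast0LessThan)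
  finally show "(block_diag_scalar a M * block_diag_scalar b N) $$ (i, j)
    = block_diag_scalar (a * b) (M * N) $$ (i, j)" .
qed (use M N in \<open>auto simp: block_diag_scalar_def\<close>)

lemma mat_adjoint_block_diag_scalar:
  "mat_adjoint (block_diag_scalar c M) = block_diag_scalar (cnj c) (mat_adjoint M)"
  by (rule eq_matI) (auto simp: block_diag_scalar_def)

lemma block_diag_scalar_one: "block_diag_scalar 1 (1\<^sub>m n) = 1\<^sub>m (Suc n)"
  by (rule eq_matI) (auto simp: block_diag_scalar_def)

lemma block_diag_scalar_real_diag_mat:
  "block_diag_scalar (complex_of_real x) (real_diag_mat n l)
     = real_diag_mat (Suc n) (\<lambda>i. if i = 0 then x else l (i - 1))"
  by (rule eq_matI) (auto simp: block_diag_scalar_def real_diag_mat_def)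

lemma unitary_mat_block_diag_scalar:
  assumes "unitary_mat n U"
  shows "unitary_mat (Suc n) (block_diag_scalar 1 U)"
  using assms unfolding unitary_mat_def
  by (simp add: mat_adjoint_block_diag_scalar block_diag_scalar_mult[of _ n n _ n] block_diag_scalar_one)

lemma cscalar_prod_self: "(w :: complex vec) \<bullet>c w = complex_of_real (\<Sum>k<dim_vec w. (cmod (w $ k))\<^sup>2)"
proof -
  have "w $ k * cnj (w $ k) = complex_of_real ((cmod (w $ k))\<^sup>2)" for k
    by (rule complex_norm_square[symmetric])
  thus ?thesis by (simp add: scalar_prod_def atLeast0LessThan of_real_sum del: of_real_power)
qed

lemma unitary_mat_normalize_corthogonal:
  assumes ws: "set ws \<subseteq> carrier_vec n" "corthogonal ws" "length ws = n"
  defines "\<nu> j \<equiv> sqrt (\<Sum>t<n. (cmod (ws ! j $ t))\<^sup>2)"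
  shows "unitary_mat n (mat n n (\<lambda>(i, j). ws ! j $ i / complex_of_real (\<nu> j)))"
    (is "unitary_mat n ?W")
proof (rule unitary_matI)
  have wsc: "ws ! j \<in> carrier_vec n" if "j < n" for j using ws that by auto
  have sq: "ws ! j \<bullet>c ws ! j = complex_of_real ((\<nu> j)\<^sup>2)" if "j < n" for j
    using cscalar_prod_self[of "ws ! j"] wsc[OF that] unfolding \<nu>_def by (simp add: sum_nonneg)
  have pos: "\<nu> j > 0" if "j < n" for j
  proof -
    have "ws ! j \<bullet>c ws ! j \<noteq> 0" using corthogonalD[OF ws(2)] that ws(3) by auto
    hence "\<nu> j \<noteq> 0" using sq[OF that] by auto
    moreover have "\<nu> j \<ge> 0" unfolding \<nu>_def by (simp add: sum_nonneg)
    ultimately show ?thesis by simp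
  qed
  show "mat_adjoint ?W * ?W = 1\<^sub>m n"
  proof (rule eq_matI)
    fix i j assume "i < dim_row (1\<^sub>m n :: complex mat)" "j < dim_col (1\<^sub>m n :: complex mat)"
    hence i: "i < n" and j: "j < n" by auto
    have "(mat_adjoint ?W * ?W) $$ (i, j) = (ws ! j \<bullet>c ws ! i) / complex_of_real (\<nu> i * \<nu> j)"
      using i j wsc[OF i]
      by (simp add: index_mult_mat_sum[of _ n n _ n] scalar_prod_def atLeast0LessThan sum_divide_distrib)
         (auto intro!: sum.cong simp: field_simps)
    also have "\<dots> = 1\<^sub>m n $$ (i, j)"
      using i j pos[OF i] corthogonalD[OF ws(2)] ws(3) sq[OF i]
      by (cases "i = j") (auto simp: power2_eq_square)
    finally show "(mat_adjoint ?W * ?W) $$ (i, j) = 1\<^sub>m n $$ (i, j)" .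
  qed auto
qed auto

lemma unitary_mat_with_first_column:
  assumes v: "v \<in> carrier_vec n" "v \<noteq> 0\<^sub>v n"
  shows "\<exists>W c. unitary_mat n W \<and> col W 0 = c \<cdot>\<^sub>v v"
proof -
  interpret cof_vec_space n "TYPE(complex)" .
  define b where "b = basis_completion v"
  from basis_completion[OF v, folded b_def]
  have b: "set b \<subseteq> carrier_vec n" "distinct b" "\<not> lin_dep (set b)" "length b = n" "hd b = v" by auto
  have n0: "n \<noteq> 0" using v by auto
  then obtain vs where bv: "b = v # vs" using b by (cases b) auto
  define ws where "ws = gram_schmidt n b"
  have ws: "set ws \<subseteq> carrier_vec n" "corthogonal ws" "length ws = n"
    using gram_schmidt_result[OF b(1-3) ws_def] b by auto
  have "hd ws = v" unfolding ws_def bv using v by simp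
  hence "ws ! 0 = v" using ws(3) n0 by (cases ws) auto
  hence "col (mat n n (\<lambda>(i, j). ws ! j $ i / complex_of_real (sqrt (\<Sum>t<n. (cmod (ws ! j $ t))\<^sup>2)))) 0
      = (1 / complex_of_real (sqrt (\<Sum>t<n. (cmod (v $ t))\<^sup>2))) \<cdot>\<^sub>v v"
    using v n0 by (intro eq_vecI) auto
  thus ?thesis using unitary_mat_normalize_corthogonal[OF ws] by blast
qed

lemma unitary_conj_first_column:
  assumes W: "unitary_mat n W" and A: "A \<in> carrier_mat n n"
    and ev: "A *\<^sub>v col W 0 = e \<cdot>\<^sub>v col W 0" and i: "i < n"
  shows "(mat_adjoint W * A * W) $$ (i, 0) = (if i = 0 then e else 0)"
proof -
  have Wc: "W \<in> carrier_mat n n" and WW: "mat_adjoint W * W = 1\<^sub>m n"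
    using W unfolding unitary_mat_def by auto
  have AW: "(A * W) $$ (k, 0) = e * W $$ (k, 0)" if "k < n" for k
    using arg_cong[OF ev, of "\<lambda>v. v $ k"] that i A Wc by auto
  have "(mat_adjoint W * A * W) $$ (i, 0) = (mat_adjoint W * (A * W)) $$ (i, 0)"
    using Wc A by (subst assoc_mult_mat[of _ n n _ n _ n]) auto
  also have "\<dots> = (\<Sum>k<n. mat_adjoint W $$ (i, k) * (A * W) $$ (k, 0))"
    using Wc A i by (intro index_mult_mat_sum[of _ n n _ n]) auto
  also have "\<dots> = e * (\<Sum>k<n. mat_adjoint W $$ (i, k) * W $$ (k, 0))"
    by (simp add: AW sum_distrib_left mult.left_commute)
  also have "(\<Sum>k<n. mat_adjoint W $$ (i, k) * W $$ (k, 0)) = (mat_adjoint W * W) $$ (i, 0)"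
    using Wc i by (intro index_mult_mat_sum[symmetric, of _ n n _ n]) auto
  finally show ?thesis using WW i by simp
qed

lemma hermitian_unitary_conj:
  fixes W A :: "complex mat"
  assumes W: "W \<in> carrier_mat n n" and A: "A \<in> carrier_mat n n" and herm: "mat_adjoint A = A"
  shows "mat_adjoint (mat_adjoint W * A * W) = mat_adjoint W * A * W"
proof -
  have "mat_adjoint (mat_adjoint W * A * W) = mat_adjoint W * mat_adjoint (mat_adjoint W * A)"
    by (rule mat_adjoint_mult[of _ n n _ n]) (use W A in auto)
  also have "mat_adjoint (mat_adjoint W * A) = A * W"
    using W A herm by (subst mat_adjoint_mult[of _ n n _ n]) auto
  finally show ?thesis using W A by (simp add: assoc_mult_mat[of _ n n _ n _ n])
qed

lemma hermitian_first_column_block: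
  assumes B: "B \<in> carrier_mat (Suc m) (Suc m)" and herm: "mat_adjoint B = B"
    and col0: "\<And>i. i < Suc m \<Longrightarrow> B $$ (i, 0) = (if i = 0 then e else 0)"
  defines "B' \<equiv> mat m m (\<lambda>(i, j). B $$ (Suc i, Suc j))"
  shows "B = block_diag_scalar (complex_of_real (Re e)) B'" and "mat_adjoint B' = B'"
proof -
  have sym: "B $$ (j, i) = cnj (B $$ (i, j))" if "i < Suc m" "j < Suc m" for i j
    using arg_cong[OF herm, of "\<lambda>M. M $$ (j, i)"] that B by auto
  have "cnj e = e" using sym[of 0 0] col0[of 0] by auto
  hence e: "e = complex_of_real (Re e)" by (simp add: complex_eq_iff)
  show "B = block_diag_scalar (complex_of_real (Re e)) B'"
  proof (rule eq_matI)
    fix i j assume "i < dim_row (block_diag_scalar (complex_of_real (Re e)) B')"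
      "j < dim_col (block_diag_scalar (complex_of_real (Re e)) B')"
    hence "i < Suc m" "j < Suc m" by (auto simp: B'_def block_diag_scalar_def)
    thus "B $$ (i, j) = block_diag_scalar (complex_of_real (Re e)) B' $$ (i, j)"
      using col0[of i] col0[of j] sym[of j 0] e by (cases i; cases j) (auto simp: B'_def block_diag_scalar_def)
  qed (use B in \<open>auto simp: B'_def block_diag_scalar_def\<close>)
  show "mat_adjoint B' = B'"
  proof (rule eq_matI)
    fix i j assume "i < dim_row B'" "j < dim_col B'"
    thus "mat_adjoint B' $$ (i, j) = B' $$ (i, j)" using sym[of "Suc i" "Suc j"] by (simp add: B'_def)
  qed (auto simp: B'_def)
qed

lemma hermitian_deflation:
  assumes A: "A \<in> carrier_mat (Suc m) (Suc m)" and herm: "mat_adjoint A = A"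
  shows "\<exists>W x B. unitary_mat (Suc m) W \<and> B \<in> carrier_mat m m \<and> mat_adjoint B = B \<and>
           mat_adjoint W * A * W = block_diag_scalar (complex_of_real x) B"
proof -
  obtain es where "char_poly A = (\<Prod>a\<leftarrow>es. [:- a, 1:])" "length es = Suc m"
    using char_poly_factorized[OF A] by auto
  then obtain e where "poly (char_poly A) e = 0" by (cases es) auto
  then obtain v where v: "v \<in> carrier_vec (Suc m)" "v \<noteq> 0\<^sub>v (Suc m)" "A *\<^sub>v v = e \<cdot>\<^sub>v v"
    using A unfolding eigenvalue_root_char_poly[OF A, symmetric] eigenvalue_def eigenvector_def by auto
  obtain W c where W: "unitary_mat (Suc m) W" and W0: "col W 0 = c \<cdot>\<^sub>v v"
    using unitary_mat_with_first_column[OF v(1,2)] by blast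
  have Wc: "W \<in> carrier_mat (Suc m) (Suc m)" using W unfolding unitary_mat_def by auto
  have "A *\<^sub>v col W 0 = e \<cdot>\<^sub>v col W 0"
    unfolding W0 using A v by (simp add: mult_mat_vec smult_smult_assoc mult.commute)
  hence "\<And>i. i < Suc m \<Longrightarrow> (mat_adjoint W * A * W) $$ (i, 0) = (if i = 0 then e else 0)"
    using unitary_conj_first_column[OF W A] by blast
  from hermitian_first_column_block[OF _ hermitian_unitary_conj[OF Wc A herm] this]
  show ?thesis using W A Wc
    by (intro exI[of _ W] exI[of _ "Re e"]
        exI[of _ "mat m m (\<lambda>(i, j). (mat_adjoint W * A * W) $$ (Suc i, Suc j))"]) auto
qed

theorem hermitian_unitary_diagonalization:
  assumes "A \<in> carrier_mat n n" "mat_adjoint A = A"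
  shows "\<exists>U l. unitary_mat n U \<and> A = U * real_diag_mat n l * mat_adjoint U"
  using assms
proof (induction n arbitrary: A)
  case 0
  have "unitary_mat 0 (1\<^sub>m 0)" by (rule unitary_matI) auto
  moreover have "A = 1\<^sub>m 0 * real_diag_mat 0 (\<lambda>_. 0) * mat_adjoint (1\<^sub>m 0)"
    using 0 by (intro eq_matI) auto
  ultimately show ?case by blast
next
  case (Suc m)
  obtain W x B where W: "unitary_mat (Suc m) W" and B: "B \<in> carrier_mat m m" "mat_adjoint B = B"
    and WAW: "mat_adjoint W * A * W = block_diag_scalar (complex_of_real x) B"
    using hermitian_deflation[OF Suc.prems] by blast
  obtain V l where V: "unitary_mat m V" and BV: "B = V * real_diag_mat m l * mat_adjoint V"
    using Suc.IH[OF B] by blast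
  define U where "U = W * block_diag_scalar 1 V"
  define l' where "l' i = (if i = 0 then x else l (i - 1))" for i
  have Wc: "W \<in> carrier_mat (Suc m) (Suc m)" and Vc: "V \<in> carrier_mat m m"
    using W V unfolding unitary_mat_def by auto
  have "block_diag_scalar (complex_of_real x) B
      = block_diag_scalar 1 V * real_diag_mat (Suc m) l' * mat_adjoint (block_diag_scalar 1 V)"
    unfolding BV l'_def block_diag_scalar_real_diag_mat[symmetric] mat_adjoint_block_diag_scalar
    using Vc by (simp add: block_diag_scalar_mult[of _ m m _ m])
  hence "A = W * (block_diag_scalar 1 V * real_diag_mat (Suc m) l' * mat_adjoint (block_diag_scalar 1 V))
           * mat_adjoint W"
    using unitary_mat_conj_eq[OF W Suc.prems(1)] WAW by simp
  also have "\<dots> = U * real_diag_mat (Suc m) l' * mat_adjoint U"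
    unfolding U_def using Wc Vc
    by (simp add: mat_adjoint_mult[of _ "Suc m" "Suc m" _ "Suc m"]
        assoc_mult_mat[of _ "Suc m" "Suc m" _ "Suc m" _ "Suc m"])
  finally have "A = U * real_diag_mat (Suc m) l' * mat_adjoint U" .
  moreover have "unitary_mat (Suc m) U"
    unfolding U_def using W unitary_mat_block_diag_scalar[OF V] by (rule unitary_mat_mult)
  ultimately show ?case by blast
qed

section \<open>Trace norm of an average of differences of rank-one projections\<close>

lemma proots_prod_linear_factors: "proots (\<Prod>a\<leftarrow>xs. [:- a, 1:]) = mset (xs :: complex list)"
proof (induction xs)
  case (Cons a xs)
  have "proots (\<Prod>a\<leftarrow>a # xs. [:- a, 1:]) = proots [:- a, 1:] + proots (\<Prod>a\<leftarrow>xs. [:- a, 1:])"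
    by (simp only: prod_list.Cons list.map, rule proots_mult) (auto simp: prod_list_zero_iff)
  thus ?case using Cons proots_linear_factor[of "- a"] by simp
qed simp

lemma proots_char_poly_real_diag_mat:
  "proots (char_poly (real_diag_mat n l)) = mset (map (\<lambda>i. complex_of_real (l i)) [0..<n])"
proof -
  have "upper_triangular (real_diag_mat n l)" by (auto simp: upper_triangular_def real_diag_mat_def)
  moreover have "diag_mat (real_diag_mat n l) = map (\<lambda>i. complex_of_real (l i)) [0..<n]"
    by (auto simp: diag_mat_def real_diag_mat_def)
  ultimately have "char_poly (real_diag_mat n l) = (\<Prod>a\<leftarrow>map (\<lambda>i. complex_of_real (l i)) [0..<n]. [:- a, 1:])"
    using char_poly_upper_triangular[OF real_diag_mat_carrier] by simp
  thus ?thesis by (simp only: proots_prod_linear_factors)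
qed

lemma trace_norm_unitary_diag:
  assumes U: "unitary_mat n U" and A: "A = U * real_diag_mat n l * mat_adjoint U"
  shows "trace_norm A = (\<Sum>i<n. \<bar>l i\<bar>)"
proof -
  have Uc: "U \<in> carrier_mat n n" using U unfolding unitary_mat_def by auto
  have "mat_adjoint A * A
      = U * (real_diag_mat n l * (mat_adjoint U * (U * (real_diag_mat n l * mat_adjoint U))))"
    unfolding A using Uc
    by (simp add: mat_adjoint_mult[of _ n n _ n] assoc_mult_mat[of _ n n _ n _ n])
  also have "\<dots> = U * real_diag_mat n (\<lambda>i. l i * l i) * mat_adjoint U"
    using Uc by (simp add: unitary_mat_cancel[OF U] real_diag_mat_mult[symmetric] assoc_mult_mat[of _ n n _ n _ n])
  finally have "similar_mat_wit (mat_adjoint A * A) (real_diag_mat n (\<lambda>i. l i * l i)) U (mat_adjoint U)"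
    using U unfolding similar_mat_wit_def unitary_mat_def Let_def by auto
  hence "char_poly (mat_adjoint A * A) = char_poly (real_diag_mat n (\<lambda>i. l i * l i))"
    by (intro char_poly_similar) (auto simp: similar_mat_def)
  hence "singular_values A
      = image_mset (\<lambda>z. sqrt (Re z)) (mset (map (\<lambda>i. complex_of_real (l i * l i)) [0..<n]))"
    unfolding singular_values_def by (simp only: proots_char_poly_real_diag_mat)
  also have "\<dots> = mset (map (\<lambda>i. \<bar>l i\<bar>) [0..<n])"
    unfolding mset_map multiset.map_comp
    by (intro image_mset_cong) (simp del: of_real_mult add: of_real_mult[symmetric])
  finally have "singular_values A = mset (map (\<lambda>i. \<bar>l i\<bar>) [0..<n])" .
  thus ?thesis unfolding trace_norm_def by (simp add: sum_unfold_sum_mset atLeast0LessThan)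
qed

lemma sum_abs_diff_norm_sq_le:
  fixes p q :: "'i \<Rightarrow> 'a :: real_normed_vector"
  shows "(\<Sum>i\<in>I. \<bar>(norm (p i))\<^sup>2 - (norm (q i))\<^sup>2\<bar>)
         \<le> L2_set (\<lambda>i. norm (p i - q i)) I * (L2_set (\<lambda>i. norm (p i)) I + L2_set (\<lambda>i. norm (q i)) I)"
proof -
  have "(\<Sum>i\<in>I. \<bar>(norm (p i))\<^sup>2 - (norm (q i))\<^sup>2\<bar>) \<le> (\<Sum>i\<in>I. \<bar>norm (p i - q i)\<bar> * \<bar>norm (p i) + norm (q i)\<bar>)"
  proof (rule sum_mono)
    fix i
    have "(norm (p i))\<^sup>2 - (norm (q i))\<^sup>2 = (norm (p i) - norm (q i)) * (norm (p i) + norm (q i))"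
      by (simp add: power2_eq_square algebra_simps)
    hence "\<bar>(norm (p i))\<^sup>2 - (norm (q i))\<^sup>2\<bar> = \<bar>norm (p i) - norm (q i)\<bar> * (norm (p i) + norm (q i))"
      by (simp add: abs_mult)
    also have "\<dots> \<le> norm (p i - q i) * (norm (p i) + norm (q i))"
      by (intro mult_right_mono norm_triangle_ineq3) auto
    finally show "\<bar>(norm (p i))\<^sup>2 - (norm (q i))\<^sup>2\<bar> \<le> \<bar>norm (p i - q i)\<bar> * \<bar>norm (p i) + norm (q i)\<bar>"
      by simp
  qed
  also have "\<dots> \<le> L2_set (\<lambda>i. norm (p i - q i)) I * L2_set (\<lambda>i. norm (p i) + norm (q i)) I"
    by (rule L2_set_mult_ineq)
  also have "\<dots> \<le> L2_set (\<lambda>i. norm (p i - q i)) I * (L2_set (\<lambda>i. norm (p i)) I + L2_set (\<lambda>i. norm (q i)) I)"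
    by (intro mult_left_mono L2_set_triangle_ineq L2_set_nonneg)
  finally show ?thesis .
qed

definition col_inner :: "complex mat \<Rightarrow> nat \<Rightarrow> (nat \<Rightarrow> complex) \<Rightarrow> complex" where
  "col_inner U i x = (\<Sum>a<dim_row U. cnj (U $$ (a, i)) * x a)"

lemma col_inner_diff: "col_inner U i (\<lambda>a. x a - y a) = col_inner U i x - col_inner U i y"
  by (simp add: col_inner_def sum_subtractf right_diff_distrib)

lemma norm_col_inner_sq:
  "dim_row U = n \<Longrightarrow> complex_of_real ((cmod (col_inner U i x))\<^sup>2)
     = (\<Sum>a<n. \<Sum>b<n. cnj (U $$ (a, i)) * (x a * cnj (x b)) * U $$ (b, i))"
proof -
  assume n: "dim_row U = n"
  have "complex_of_real ((cmod (col_inner U i x))\<^sup>2)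
      = (\<Sum>a<n. cnj (U $$ (a, i)) * x a) * (\<Sum>b<n. U $$ (b, i) * cnj (x b))"
    using n by (simp add: complex_norm_square col_inner_def del: of_real_power)
  also have "\<dots> = (\<Sum>a<n. \<Sum>b<n. cnj (U $$ (a, i)) * (x a * cnj (x b)) * U $$ (b, i))"
    by (simp add: sum_product) (intro sum.cong refl, simp add: mult_ac)
  finally show ?thesis .
qed

lemma sum_norm_col_inner_sq:
  assumes U: "unitary_mat n U"
  shows "(\<Sum>i<n. (cmod (col_inner U i x))\<^sup>2) = (\<Sum>a<n. (cmod (x a))\<^sup>2)"
proof -
  have Uc: "U \<in> carrier_mat n n" and UU: "U * mat_adjoint U = 1\<^sub>m n"
    using U unfolding unitary_mat_def by auto
  have "complex_of_real (\<Sum>i<n. (cmod (col_inner U i x))\<^sup>2)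
      = (\<Sum>i<n. \<Sum>a<n. \<Sum>b<n. cnj (U $$ (a, i)) * (x a * cnj (x b)) * U $$ (b, i))"
    using Uc by (simp add: of_real_sum norm_col_inner_sq del: of_real_power)
  also have "\<dots> = (\<Sum>i<n. \<Sum>a<n. \<Sum>b<n. x a * cnj (x b) * (U $$ (b, i) * cnj (U $$ (a, i))))"
    by (intro sum.cong refl) (simp add: mult_ac)
  also have "\<dots> = (\<Sum>a<n. \<Sum>b<n. \<Sum>i<n. x a * cnj (x b) * (U $$ (b, i) * cnj (U $$ (a, i))))"
    by (subst sum.swap) (rule sum.cong[OF refl], rule sum.swap)
  also have "\<dots> = (\<Sum>a<n. \<Sum>b<n. x a * cnj (x b) * (\<Sum>i<n. U $$ (b, i) * cnj (U $$ (a, i))))"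
    by (simp add: sum_distrib_left)
  also have "\<dots> = (\<Sum>a<n. \<Sum>b<n. x a * cnj (x b) * (U * mat_adjoint U) $$ (b, a))"
    using Uc by (intro sum.cong refl) (auto simp: scalar_prod_def atLeast0LessThan)
  also have "\<dots> = (\<Sum>a<n. complex_of_real ((cmod (x a))\<^sup>2))"
    by (simp add: UU complex_norm_square if_distrib cong: if_cong del: of_real_power)
  also have "\<dots> = complex_of_real (\<Sum>a<n. (cmod (x a))\<^sup>2)"
    by (rule of_real_sum[symmetric])
  finally show ?thesis by (simp only: of_real_eq_iff)
qed

lemma L2_set_col_inner:
  "unitary_mat n U \<Longrightarrow> L2_set (\<lambda>i. cmod (col_inner U i x)) {..<n} = L2_set (\<lambda>a. cmod (x a)) {..<n}"
  by (simp add: L2_set_def sum_norm_col_inner_sq)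

lemma sum_abs_diff_col_inner_sq_le:
  assumes "unitary_mat n U"
  shows "(\<Sum>i<n. \<bar>(cmod (col_inner U i x))\<^sup>2 - (cmod (col_inner U i y))\<^sup>2\<bar>)
         \<le> L2_set (\<lambda>a. cmod (x a - y a)) {..<n}
             * (L2_set (\<lambda>a. cmod (x a)) {..<n} + L2_set (\<lambda>a. cmod (y a)) {..<n})"
  using sum_abs_diff_norm_sq_le[of "\<lambda>i. col_inner U i x" "\<lambda>i. col_inner U i y" "{..<n}"]
  by (simp add: col_inner_diff[symmetric] L2_set_col_inner[OF assms])

lemma diag_entry_unitary_conj:
  assumes U: "U \<in> carrier_mat n n" and A: "A \<in> carrier_mat n n" and i: "i < n"
  shows "(mat_adjoint U * A * U) $$ (i, i) = (\<Sum>a<n. \<Sum>b<n. cnj (U $$ (a, i)) * A $$ (a, b) * U $$ (b, i))"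
proof -
  have "(mat_adjoint U * A * U) $$ (i, i) = (\<Sum>b<n. (mat_adjoint U * A) $$ (i, b) * U $$ (b, i))"
    using U A i by (intro index_mult_mat_sum[of _ n n _ n]) auto
  also have "\<dots> = (\<Sum>b<n. (\<Sum>a<n. cnj (U $$ (a, i)) * A $$ (a, b)) * U $$ (b, i))"
    using U A i by (intro sum.cong refl) (auto simp: scalar_prod_def atLeast0LessThan)
  also have "\<dots> = (\<Sum>b<n. \<Sum>a<n. cnj (U $$ (a, i)) * A $$ (a, b) * U $$ (b, i))"
    by (simp add: sum_distrib_right)
  also have "\<dots> = (\<Sum>a<n. \<Sum>b<n. cnj (U $$ (a, i)) * A $$ (a, b) * U $$ (b, i))"
    by (rule sum.swap)
  finally show ?thesis .
qed

lemma unitary_conj_diag_average_projection_diff: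
  fixes x y :: "'s \<Rightarrow> nat \<Rightarrow> complex"
  assumes U: "U \<in> carrier_mat n n" and A: "A \<in> carrier_mat n n" and i: "i < n"
    and entries: "\<And>a b. a < n \<Longrightarrow> b < n \<Longrightarrow>
       A $$ (a, b) = (\<Sum>S\<in>T. x S a * cnj (x S b) - y S a * cnj (y S b)) / of_nat (card T)"
  shows "(mat_adjoint U * A * U) $$ (i, i) = complex_of_real
     ((\<Sum>S\<in>T. (cmod (col_inner U i (x S)))\<^sup>2 - (cmod (col_inner U i (y S)))\<^sup>2) / real (card T))"
proof -
  define q where "q z S a b = cnj (U $$ (a, i)) * (z S a * cnj (z S b)) * U $$ (b, i)"
    for z :: "'s \<Rightarrow> nat \<Rightarrow> complex" and S a b
  have "(mat_adjoint U * A * U) $$ (i, i) = (\<Sum>a<n. \<Sum>b<n. (\<Sum>S\<in>T. q x S a b - q y S a b) / of_nat (card T))"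
    unfolding diag_entry_unitary_conj[OF U A i]
    by (intro sum.cong refl)
       (simp add: entries q_def sum_distrib_left sum_distrib_right sum_divide_distrib algebra_simps)
  also have "\<dots> = (\<Sum>S\<in>T. (\<Sum>a<n. \<Sum>b<n. q x S a b) - (\<Sum>a<n. \<Sum>b<n. q y S a b)) / of_nat (card T)"
    by (simp add: sum_divide_distrib[symmetric] sum_subtractf sum.swap[of _ T])
  also have "\<dots> = complex_of_real
     ((\<Sum>S\<in>T. (cmod (col_inner U i (x S)))\<^sup>2 - (cmod (col_inner U i (y S)))\<^sup>2) / real (card T))"
    using U by (simp add: q_def norm_col_inner_sq of_real_sum del: of_real_power)
  finally show ?thesis .
qed

lemma average_projection_diff_spectrum:
  fixes x y :: "'s \<Rightarrow> nat \<Rightarrow> complex"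
  assumes A: "A \<in> carrier_mat n n"
    and entries: "\<And>a b. a < n \<Longrightarrow> b < n \<Longrightarrow>
       A $$ (a, b) = (\<Sum>S\<in>T. x S a * cnj (x S b) - y S a * cnj (y S b)) / of_nat (card T)"
  obtains U l where "unitary_mat n U" and "trace_norm A = (\<Sum>i<n. \<bar>l i\<bar>)"
    and "\<And>i. i < n \<Longrightarrow>
       l i = (\<Sum>S\<in>T. (cmod (col_inner U i (x S)))\<^sup>2 - (cmod (col_inner U i (y S)))\<^sup>2) / real (card T)"
proof -
  have "mat_adjoint A = A"
    using A by (intro eq_matI) (auto simp: entries mult.commute)
  then obtain U l where U: "unitary_mat n U" and AU: "A = U * real_diag_mat n l * mat_adjoint U"
    using hermitian_unitary_diagonalization[OF A] by blast
  have Uc: "U \<in> carrier_mat n n" using U unfolding unitary_mat_def by auto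
  have diag: "mat_adjoint U * A * U = real_diag_mat n l"
    unfolding AU using U unfolding unitary_mat_def
    by (simp add: assoc_mult_mat[of _ n n _ n _ n] unitary_mat_cancel[OF U] right_mult_one_mat[of _ n n])
  have "l i = (\<Sum>S\<in>T. (cmod (col_inner U i (x S)))\<^sup>2 - (cmod (col_inner U i (y S)))\<^sup>2) / real (card T)"
    if i: "i < n" for i
  proof -
    have "complex_of_real (l i) = (mat_adjoint U * A * U) $$ (i, i)"
      using i by (simp add: diag real_diag_mat_def)
    also have "\<dots> = complex_of_real
        ((\<Sum>S\<in>T. (cmod (col_inner U i (x S)))\<^sup>2 - (cmod (col_inner U i (y S)))\<^sup>2) / real (card T))"
      by (rule unitary_conj_diag_average_projection_diff[OF Uc A i entries])
    finally show ?thesis by (simp only: of_real_eq_iff)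
  qed
  with that U trace_norm_unitary_diag[OF U AU] show ?thesis by blast
qed

lemma trace_norm_average_projection_diff_le:
  fixes x y :: "'s \<Rightarrow> nat \<Rightarrow> complex"
  assumes A: "A \<in> carrier_mat n n"
    and entries: "\<And>a b. a < n \<Longrightarrow> b < n \<Longrightarrow>
       A $$ (a, b) = (\<Sum>S\<in>T. x S a * cnj (x S b) - y S a * cnj (y S b)) / of_nat (card T)"
    and T: "finite T" "T \<noteq> {}"
    and x: "\<And>S. S \<in> T \<Longrightarrow> L2_set (\<lambda>a. cmod (x S a)) {..<n} \<le> 1"
    and y: "\<And>S. S \<in> T \<Longrightarrow> L2_set (\<lambda>a. cmod (y S a)) {..<n} \<le> 1"
    and xy: "\<And>S. S \<in> T \<Longrightarrow> L2_set (\<lambda>a. cmod (x S a - y S a)) {..<n} \<le> \<delta>"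
  shows "trace_norm A \<le> 2 * \<delta>"
proof -
  obtain U l where U: "unitary_mat n U" and tn: "trace_norm A = (\<Sum>i<n. \<bar>l i\<bar>)"
    and l: "\<And>i. i < n \<Longrightarrow>
       l i = (\<Sum>S\<in>T. (cmod (col_inner U i (x S)))\<^sup>2 - (cmod (col_inner U i (y S)))\<^sup>2) / real (card T)"
    using average_projection_diff_spectrum[OF A entries] by blast
  define \<alpha> where "\<alpha> S i = (cmod (col_inner U i (x S)))\<^sup>2" for S i
  define \<beta> where "\<beta> S i = (cmod (col_inner U i (y S)))\<^sup>2" for S i
  from T(2) obtain S0 where "S0 \<in> T" by blast
  hence \<delta>: "0 \<le> \<delta>" using xy L2_set_nonneg order_trans by meson
  have per_S: "(\<Sum>i<n. \<bar>\<alpha> S i - \<beta> S i\<bar>) \<le> \<delta> * (1 + 1)" if "S \<in> T" for S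
    unfolding \<alpha>_def \<beta>_def using sum_abs_diff_col_inner_sq_le[OF U, of "x S" "y S"]
    by (rule order_trans) (intro mult_mono add_mono xy x y that; simp add: \<delta> add_nonneg_nonneg)
  have "trace_norm A \<le> (\<Sum>i<n. (\<Sum>S\<in>T. \<bar>\<alpha> S i - \<beta> S i\<bar>) / real (card T))"
    unfolding tn by (intro sum_mono) (simp add: l \<alpha>_def \<beta>_def divide_right_mono sum_abs)
  also have "\<dots> = (\<Sum>S\<in>T. \<Sum>i<n. \<bar>\<alpha> S i - \<beta> S i\<bar>) / real (card T)"
    by (simp add: sum_divide_distrib[symmetric] sum.swap[of _ T])
  also have "\<dots> \<le> (\<Sum>S\<in>T. \<delta> * (1 + 1)) / real (card T)"
    by (intro divide_right_mono sum_mono per_S) auto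
  also have "\<dots> = 2 * \<delta>" using T by simp
  finally show ?thesis .
qed

section \<open>Uniform superpositions of k-tuples\<close>

lemma tup_Suc: "tup d (Suc k) a = a mod d # tup d k (a div d)"
proof -
  have "tup d (Suc k) a = map (\<lambda>t. a div d ^ t mod d) (0 # [Suc 0..<Suc k])"
    unfolding tup_def upt_conv_Cons[OF zero_less_Suc] ..
  also have "\<dots> = a mod d # map (\<lambda>t. a div d ^ Suc t mod d) [0..<k]"
    by (simp del: upt_Suc add: map_Suc_upt[symmetric] comp_def)
  also have "map (\<lambda>t. a div d ^ Suc t mod d) [0..<k] = tup d k (a div d)"
    unfolding tup_def by (simp add: div_mult2_eq)
  finally show ?thesis .
qed

lemma length_tup [simp]: "length (tup d k a) = k"
  by (simp add: tup_def)

lemma inj_on_tup: "0 < d \<Longrightarrow> inj_on (tup d k) {..<d ^ k}"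
proof (induction k)
  case (Suc k)
  show ?case
  proof (rule inj_onI)
    fix a b assume a: "a \<in> {..<d ^ Suc k}" and b: "b \<in> {..<d ^ Suc k}"
      and eq: "tup d (Suc k) a = tup d (Suc k) b"
    hence "a mod d = b mod d" "tup d k (a div d) = tup d k (b div d)" by (auto simp: tup_Suc)
    moreover have "a div d < d ^ k" "b div d < d ^ k"
      using a b Suc.prems by (auto simp: div_less_iff_less_mult mult.commute)
    ultimately show "a = b" using Suc by (metis div_mod_decomp inj_onD lessThan_iff)
  qed
qed (auto intro: inj_onI)

definition tuples :: "'a set \<Rightarrow> nat \<Rightarrow> 'a list set" where
  "tuples S k = {xs. set xs \<subseteq> S \<and> length xs = k}"

lemma finite_tuples: "finite S \<Longrightarrow> finite (tuples S k)"
  unfolding tuples_def by (rule finite_lists_length_eq)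

lemma card_tuples: "finite S \<Longrightarrow> card (tuples S k) = card S ^ k"
  unfolding tuples_def by (rule card_lists_length_eq)

lemma distinct_tuples_subset_tuples: "distinct_tuples S k \<subseteq> tuples S k"
  by (auto simp: distinct_tuples_def tuples_def)

lemma bij_betw_tup: "0 < d \<Longrightarrow> bij_betw (tup d k) {..<d ^ k} (tuples {0..<d} k)"
proof -
  assume d: "0 < d"
  have "tup d k ` {..<d ^ k} \<subseteq> tuples {0..<d} k" using d by (auto simp: tuples_def tup_def)
  moreover have "card (tup d k ` {..<d ^ k}) = card (tuples {0..<d} k)"
    by (simp add: card_image[OF inj_on_tup[OF d]] card_tuples)
  ultimately show ?thesis
    using inj_on_tup[OF d] by (simp add: bij_betw_def card_subset_eq finite_tuples)
qed

lemma pochhammer_eq_prod_atLeastAtMost: "k \<le> s \<Longrightarrow> pochhammer (s + 1 - k) k = \<Prod>{s - k + 1..s}"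
proof (induction k)
  case (Suc k)
  have "pochhammer (s + 1 - Suc k) (Suc k) = (s - k) * pochhammer (s + 1 - k) k"
    using Suc.prems by (simp add: pochhammer_rec Suc_diff_Suc Suc_diff_le)
  also have "\<dots> = \<Prod>{s - Suc k + 1..s}"
    using Suc by (simp add: prod.atLeast_Suc_atMost Suc_diff_Suc)
  finally show ?case .
qed simp

lemma card_distinct_tuples:
  "finite S \<Longrightarrow> k \<le> card S \<Longrightarrow> card (distinct_tuples S k) = pochhammer (card S + 1 - k) k"
  using card_lists_distinct_length_eq[of S k] pochhammer_eq_prod_atLeastAtMost[of k "card S"]
  by (simp add: distinct_tuples_def conj_commute)

lemma distinct_tuples_nonempty: "finite S \<Longrightarrow> k \<le> card S \<Longrightarrow> distinct_tuples S k \<noteq> {}"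
  using card_distinct_tuples[of S k] pochhammer_pos[of "card S + 1 - k" k] by fastforce

lemma tuples_mono: "S \<subseteq> S' \<Longrightarrow> tuples S k \<subseteq> tuples S' k"
  by (auto simp: tuples_def)

lemma prod_atLeastAtMost_ratio_ge:
  assumes "k \<le> s"
  shows "1 - real k ^ 2 / (2 * real s) \<le> real (\<Prod>{s - k + 1..s}) / real s ^ k"
proof (cases "k = 0")
  case False
  hence s: "0 < s" using assms by simp
  have "(\<Prod>j<k. real s - real j) = (\<Prod>i\<in>{s - k + 1..s}. real i)"
    by (rule prod.reindex_bij_witness[of _ "\<lambda>i. s - i" "\<lambda>i. s - i"]) (use assms in \<open>auto simp: of_nat_diff\<close>)
  hence "real (\<Prod>{s - k + 1..s}) = (\<Prod>j<k. real s - real j)" by (simp add: of_nat_prod)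
  moreover have "(\<Prod>j<k. 1 - real j / real s) = (\<Prod>j<k. (real s - real j) / real s)"
    using s by (intro prod.cong) (auto simp: field_simps)
  ultimately have "real (\<Prod>{s - k + 1..s}) / real s ^ k = (\<Prod>j<k. 1 - real j / real s)"
    by (simp add: prod_dividef)
  moreover have "1 - (\<Sum>j<k. real j / real s) \<le> (\<Prod>j<k. 1 - real j / real s)"
    by (rule Weierstrass_prod_ineq) (use assms in auto)
  moreover have "(\<Sum>j<k. real j / real s) \<le> real k ^ 2 / (2 * real s)"
  proof -
    have "(\<Sum>j<k. real j) \<le> real k ^ 2 / 2"
      by (induction k) (simp_all add: power2_eq_square field_simps)
    thus ?thesis using s by (simp add: sum_divide_distrib[symmetric] divide_right_mono field_simps)
  qed
  ultimately show ?thesis by linarith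
qed simp

definition uniform_unit_vector :: "'a set \<Rightarrow> 'a \<Rightarrow> real" where
  "uniform_unit_vector X x = (if x \<in> X then 1 / sqrt (real (card X)) else 0)"

lemma sum_uniform_unit_vector_sq:
  assumes "finite Y" "X \<subseteq> Y" "X \<noteq> {}"
  shows "(\<Sum>y\<in>Y. (uniform_unit_vector X y)\<^sup>2) = 1"
proof -
  have X: "finite X" "card X > 0" using assms by (auto simp: card_gt_0_iff intro: finite_subset)
  have "(\<Sum>y\<in>Y. (uniform_unit_vector X y)\<^sup>2) = (\<Sum>y\<in>X. 1 / real (card X))"
    using assms by (intro sum.mono_neutral_cong_right) (auto simp: uniform_unit_vector_def power_divide)
  also have "\<dots> = 1" using X assms by simp
  finally show ?thesis .
qed

lemma sum_diff_uniform_unit_vector_sq: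
  assumes Z: "finite Z" "Y \<subseteq> Z" and XY: "X \<subseteq> Y" "X \<noteq> {}"
  shows "(\<Sum>z\<in>Z. (uniform_unit_vector Y z - uniform_unit_vector X z)\<^sup>2) = 2 - 2 * sqrt (card X / card Y)"
proof -
  have fin: "finite Y" "finite X" using Z XY by (meson finite_subset)+
  define p q where "p = sqrt (card X)" and "q = sqrt (card Y)"
  have pq: "0 < p" "0 < q" "real (card X) = p\<^sup>2" "real (card Y) = q\<^sup>2"
    using fin XY card_mono[OF fin(1) XY(1)] by (auto simp: p_def q_def card_gt_0_iff)
  have "(\<Sum>z\<in>Z. (uniform_unit_vector Y z - uniform_unit_vector X z)\<^sup>2)
      = (\<Sum>z\<in>Y. (uniform_unit_vector Y z - uniform_unit_vector X z)\<^sup>2)"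
    using Z XY by (intro sum.mono_neutral_right) (auto simp: uniform_unit_vector_def)
  also have "\<dots> = (\<Sum>z\<in>Y - X. (1 / q)\<^sup>2) + (\<Sum>z\<in>X. (1 / q - 1 / p)\<^sup>2)"
    using XY fin by (simp add: sum.subset_diff[OF XY(1) fin(1)] uniform_unit_vector_def p_def q_def)
  also have "\<dots> = (q\<^sup>2 - p\<^sup>2) * (1 / q)\<^sup>2 + p\<^sup>2 * (1 / q - 1 / p)\<^sup>2"
    using pq fin XY by (simp add: card_Diff_subset of_nat_diff card_mono)
  also have "\<dots> = 2 - 2 * (p / q)"
    using pq by (simp add: field_simps power2_eq_square)
  also have "p / q = sqrt (card X / card Y)" by (simp add: p_def q_def real_sqrt_divide)
  finally show ?thesis .
qed

(* The vector |u_X> of the proof idea, with coordinate a standing for the tuple tup d k a. *)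
definition uniform_state :: "nat \<Rightarrow> nat \<Rightarrow> nat list set \<Rightarrow> nat \<Rightarrow> complex" where
  "uniform_state d k X a = complex_of_real (uniform_unit_vector X (tup d k a))"

lemma L2_set_uniform_state:
  assumes "0 < d" "X \<subseteq> tuples {0..<d} k" "X \<noteq> {}"
  shows "L2_set (\<lambda>a. cmod (uniform_state d k X a)) {..<d ^ k} = 1"
  using sum.reindex_bij_betw[OF bij_betw_tup[OF assms(1)], of "\<lambda>xs. (uniform_unit_vector X xs)\<^sup>2"]
    sum_uniform_unit_vector_sq[OF finite_tuples assms(2,3)]
  by (simp add: L2_set_def uniform_state_def)

lemma L2_set_uniform_state_diff:
  assumes "0 < d" "Y \<subseteq> tuples {0..<d} k" "X \<subseteq> Y" "X \<noteq> {}"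
  shows "L2_set (\<lambda>a. cmod (uniform_state d k Y a - uniform_state d k X a)) {..<d ^ k}
           = sqrt (2 - 2 * sqrt (card X / card Y))"
  using sum.reindex_bij_betw[OF bij_betw_tup[OF assms(1)],
      of "\<lambda>xs. (uniform_unit_vector Y xs - uniform_unit_vector X xs)\<^sup>2"]
    sum_diff_uniform_unit_vector_sq[OF finite_tuples assms(2-4)]
  by (simp add: L2_set_def uniform_state_def flip: of_real_diff)

lemma L2_set_uniform_tuple_states:
  assumes d: "0 < d" and S: "S \<subseteq> {0..<d}" and k: "k \<le> card S"
  shows "L2_set (\<lambda>a. cmod (uniform_state d k (tuples S k) a)) {..<d ^ k} = 1"
    and "L2_set (\<lambda>a. cmod (uniform_state d k (distinct_tuples S k) a)) {..<d ^ k} = 1"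
proof -
  have nonempty: "distinct_tuples S k \<noteq> {}" "tuples S k \<noteq> {}"
    using distinct_tuples_nonempty[OF finite_subset[OF S finite_atLeastLessThan] k]
      distinct_tuples_subset_tuples[of S k] by auto
  show "L2_set (\<lambda>a. cmod (uniform_state d k (tuples S k) a)) {..<d ^ k} = 1"
    by (rule L2_set_uniform_state[OF d tuples_mono[OF S] nonempty(2)])
  show "L2_set (\<lambda>a. cmod (uniform_state d k (distinct_tuples S k) a)) {..<d ^ k} = 1"
    by (rule L2_set_uniform_state[OF d order_trans[OF distinct_tuples_subset_tuples tuples_mono[OF S]]
          nonempty(1)])
qed

lemma L2_set_uniform_tuple_states_diff_le:
  assumes d: "0 < d" and S: "S \<subseteq> {0..<d}" and k: "k \<le> card S"
  shows "L2_set (\<lambda>a. cmod (uniform_state d k (tuples S k) a - uniform_state d k (distinct_tuples S k) a))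
           {..<d ^ k} \<le> real k / sqrt (card S)"
proof -
  have fin: "finite S" using S finite_subset by blast
  define r where "r = real (card (distinct_tuples S k)) / real (card (tuples S k))"
  have card_dt: "card (distinct_tuples S k) = \<Prod>{card S - k + 1..card S}"
    using card_distinct_tuples[OF fin k] pochhammer_eq_prod_atLeastAtMost[OF k] by simp
  have r_ge: "1 - real k ^ 2 / (2 * real (card S)) \<le> r"
    unfolding r_def card_dt card_tuples[OF fin] using prod_atLeastAtMost_ratio_ge[OF k] by simp
  have r_le: "r \<le> 1" and r_nonneg: "0 \<le> r"
    using card_mono[OF finite_tuples[OF fin] distinct_tuples_subset_tuples[of S k]] unfolding r_def
    by (auto simp: divide_le_eq_1)
  have "L2_set (\<lambda>a. cmod (uniform_state d k (tuples S k) a - uniform_state d k (distinct_tuples S k) a))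
           {..<d ^ k} = sqrt (2 - 2 * sqrt r)"
    unfolding r_def using distinct_tuples_nonempty[OF fin k] tuples_mono[OF S]
    by (intro L2_set_uniform_state_diff d distinct_tuples_subset_tuples)
  also have "\<dots> \<le> sqrt (2 - 2 * r)"
  proof -
    have "r = sqrt r * sqrt r" using r_nonneg by simp
    also have "\<dots> \<le> sqrt r" using r_le r_nonneg by (intro mult_left_le_one_le) auto
    finally show ?thesis by simp
  qed
  also have "\<dots> \<le> sqrt (real k ^ 2 / real (card S))"
    using r_ge by (intro real_sqrt_le_mono) (simp add: field_simps)
  also have "\<dots> = real k / sqrt (card S)" by (simp add: real_sqrt_divide)
  finally show ?thesis .
qed

lemma prod_if_nth_mem:
  fixes c :: "'a :: comm_semiring_1"
  shows "(\<Prod>t<length xs. if xs ! t \<in> S then c else 0) = (if set xs \<subseteq> S then c ^ length xs else 0)"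
proof (cases "set xs \<subseteq> S")
  case True
  hence "(\<Prod>t<length xs. if xs ! t \<in> S then c else 0) = (\<Prod>t<length xs. c)"
    by (intro prod.cong) (auto simp: set_conv_nth)
  thus ?thesis using True by simp
next
  case False
  then obtain t where "t < length xs" "xs ! t \<notin> S" by (auto simp: set_conv_nth)
  hence "(\<Prod>t<length xs. if xs ! t \<in> S then c else 0) = 0" by (auto intro!: prod_zero)
  thus ?thesis using False by simp
qed

lemma tensor_pow_phi_entry:
  assumes d: "0 < d" and S: "S \<subseteq> {0..<d}" and a: "a < d ^ k" and b: "b < d ^ k"
  shows "tensor_pow d k (phi d S) $$ (a, b)
           = uniform_state d k (tuples S k) a * cnj (uniform_state d k (tuples S k) b)"
proof -
  define c where "c i = (if i \<in> S then 1 / complex_of_real (sqrt (card S)) else 0)" for i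
  have state: "(\<Prod>t<k. c (tup d k x ! t)) = uniform_state d k (tuples S k) x" for x
  proof -
    have "card (tuples S k) = card S ^ k" using S by (intro card_tuples) (auto intro: finite_subset)
    thus ?thesis
      using prod_if_nth_mem[of "tup d k x" S "1 / complex_of_real (sqrt (card S))"]
      by (simp add: c_def uniform_state_def uniform_unit_vector_def tuples_def real_sqrt_power power_one_over)
  qed
  have lt: "tup d k x ! t < d" if "t < k" for x t using that d by (simp add: tup_def)
  have "tensor_pow d k (phi d S) $$ (a, b) = (\<Prod>t<k. phi d S $$ (tup d k a ! t, tup d k b ! t))"
    using a b by (simp add: tensor_pow_def)
  also have "\<dots> = (\<Prod>t<k. c (tup d k a ! t) * cnj (c (tup d k b ! t)))"
    by (intro prod.cong refl) (simp add: phi_def c_def lt)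
  also have "\<dots> = (\<Prod>t<k. c (tup d k a ! t)) * cnj (\<Prod>t<k. c (tup d k b ! t))"
    by (simp add: prod.distrib cnj_prod)
  finally show ?thesis by (simp add: state)
qed

lemma tilde_term_entry:
  assumes S: "finite S" "k \<le> card S" and a: "a < d ^ k" and b: "b < d ^ k"
  shows "tilde_term d k S $$ (a, b)
           = uniform_state d k (distinct_tuples S k) a * cnj (uniform_state d k (distinct_tuples S k) b)"
proof -
  define P where "P = real (card (distinct_tuples S k))"
  have "P > 0" using card_distinct_tuples[OF S] S(2) by (simp add: P_def pochhammer_pos)
  hence "1 / sqrt P * (1 / sqrt P) = 1 / P" by simp
  hence "1 / complex_of_real P = complex_of_real (1 / sqrt P) * complex_of_real (1 / sqrt P)"
    by (metis of_real_1 of_real_divide of_real_mult)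
  thus ?thesis
    using a b card_distinct_tuples[OF S]
    by (simp add: tilde_term_def uniform_state_def uniform_unit_vector_def P_def)
qed

lemma index_Phi_minus_Phi_tilde:
  assumes d: "0 < d" and k: "k \<le> s" and a: "a < d ^ k" and b: "b < d ^ k"
  shows "(Phi d s k - Phi_tilde d s k) $$ (a, b) = (\<Sum>S\<in>subsets_of_size d s.
      uniform_state d k (tuples S k) a * cnj (uniform_state d k (tuples S k) b)
    - uniform_state d k (distinct_tuples S k) a * cnj (uniform_state d k (distinct_tuples S k) b))
    / of_nat (card (subsets_of_size d s))"
proof -
  have entry: "tensor_pow d k (phi d S) $$ (a, b) - tilde_term d k S $$ (a, b)
      = uniform_state d k (tuples S k) a * cnj (uniform_state d k (tuples S k) b)
        - uniform_state d k (distinct_tuples S k) a * cnj (uniform_state d k (distinct_tuples S k) b)"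
    if "S \<in> subsets_of_size d s" for S
    using that k finite_subset[of S "{0..<d}"]
    by (simp add: subsets_of_size_def tensor_pow_phi_entry[OF d _ a b] tilde_term_entry[OF _ _ a b])
  have "(Phi d s k - Phi_tilde d s k) $$ (a, b) = (\<Sum>S\<in>subsets_of_size d s.
      tensor_pow d k (phi d S) $$ (a, b) - tilde_term d k S $$ (a, b)) / of_nat (card (subsets_of_size d s))"
    using a b by (simp add: Phi_def Phi_tilde_def expect_S_def diff_divide_distrib sum_subtractf)
  also have "\<dots> = (\<Sum>S\<in>subsets_of_size d s.
      uniform_state d k (tuples S k) a * cnj (uniform_state d k (tuples S k) b)
    - uniform_state d k (distinct_tuples S k) a * cnj (uniform_state d k (distinct_tuples S k) b))
    / of_nat (card (subsets_of_size d s))"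
    by (simp add: entry cong: sum.cong)
  finally show ?thesis .
qed

theorem proposition2:
  "\<exists>C::real. \<forall>d s k :: nat. 1 \<le> k \<and> k \<le> s \<and> s \<le> d \<longrightarrow>
     trace_norm (Phi d s k - Phi_tilde d s k) \<le> C * real k / sqrt (real s)"
proof (intro exI[of _ 2] allI impI)
  fix d s k :: nat
  assume "1 \<le> k \<and> k \<le> s \<and> s \<le> d"
  hence k: "k \<le> s" and d: "0 < d" "s \<le> d" by auto
  let ?T = "subsets_of_size d s"
  have T: "finite ?T" "?T \<noteq> {}"
    using d finite_subset[of ?T "Pow {0..<d}"] by (auto simp: subsets_of_size_def intro!: exI[of _ "{0..<s}"])
  have S: "S \<subseteq> {0..<d}" "card S = s" "k \<le> card S" if "S \<in> ?T" for S
    using that k by (auto simp: subsets_of_size_def)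
  have "trace_norm (Phi d s k - Phi_tilde d s k) \<le> 2 * (real k / sqrt (real s))"
  proof (rule trace_norm_average_projection_diff_le[OF _ index_Phi_minus_Phi_tilde[OF d(1) k] T])
    show "Phi d s k - Phi_tilde d s k \<in> carrier_mat (d ^ k) (d ^ k)"
      by (auto simp: Phi_def Phi_tilde_def expect_S_def)
    fix S assume "S \<in> ?T"
    thus "L2_set (\<lambda>a. cmod (uniform_state d k (tuples S k) a - uniform_state d k (distinct_tuples S k) a))
        {..<d ^ k} \<le> real k / sqrt (real s)"
      using L2_set_uniform_tuple_states_diff_le[OF d(1) S(1,3)] S(2) by simp
  qed (use S L2_set_uniform_tuple_states[OF d(1)] in auto)
  thus "trace_norm (Phi d s k - Phi_tilde d s k) \<le> 2 * real k / sqrt (real s)" by simp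
qed

end
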